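(* Let $G$ be a finite simple graph of order $n$ and size $m$. If $m\leq 0.0851\,n^2$ and $G$ is $2$-connected, then $\mathrm{nRel}(G;p)$ has at least two distinct points of inflection in $(0,1)$ (points at which the second derivative changes sign).
   Context: For a graph $G$ on $n$ vertices, a connected set is a nonempty vertex subset $C$ such that the induced subgraph $G[C]$ is connected. The node reliability of $G$ is the polynomial \[ \mathrm{nRel}(G;p)=\sum_{C}p^{|C|}(1-p)^{n-|C|}, \] the sum over all connected sets $C$ of $G$. The size of $G$ is its number of edges. *)

theory Defs
  imports "HOL-Analysis.Analysis"
begin

definition simple_graph :: "'a set \<Rightarrow> ('a \<Rightarrow> 'a \<Rightarrow> bool) \<Rightarrow> bool" where
  "simple_graph V E \<longleftrightarrow> finite V \<and> (\<forall>x y. E x y \<longrightarrow> E y x) \<and> (\<forall>x. \<not> E x x)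
     \<and> (\<forall>x y. E x y \<longrightarrow> x \<in> V \<and> y \<in> V)"

definition graph_size :: "('a \<Rightarrow> 'a \<Rightarrow> bool) \<Rightarrow> nat" where
  "graph_size E = card {{x, y} | x y. E x y}"

definition connected_set :: "'a set \<Rightarrow> ('a \<Rightarrow> 'a \<Rightarrow> bool) \<Rightarrow> 'a set \<Rightarrow> bool" where
  "connected_set V E C \<longleftrightarrow> C \<noteq> {} \<and> C \<subseteq> V \<and>
     (\<forall>x\<in>C. \<forall>y\<in>C. (\<lambda>a b. E a b \<and> a \<in> C \<and> b \<in> C)\<^sup>*\<^sup>* x y)"

definition two_connected :: "'a set \<Rightarrow> ('a \<Rightarrow> 'a \<Rightarrow> bool) \<Rightarrow> bool" where
  "two_connected V E \<longleftrightarrow> card V \<ge> 3 \<and> connected_set V E V \<and>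
     (\<forall>v\<in>V. connected_set V E (V - {v}))"

definition nRel :: "'a set \<Rightarrow> ('a \<Rightarrow> 'a \<Rightarrow> bool) \<Rightarrow> real \<Rightarrow> real" where
  "nRel V E p = (\<Sum>C\<in>{C. connected_set V E C}. p ^ card C * (1 - p) ^ (card V - card C))"

definition inflection_point :: "(real \<Rightarrow> real) \<Rightarrow> real \<Rightarrow> bool" where
  "inflection_point f x \<longleftrightarrow> (\<exists>e>0.
     ((\<forall>y. x - e < y \<and> y < x \<longrightarrow> deriv (deriv f) y < 0) \<and>
      (\<forall>y. x < y \<and> y < x + e \<longrightarrow> deriv (deriv f) y > 0)) \<or>
     ((\<forall>y. x - e < y \<and> y < x \<longrightarrow> deriv (deriv f) y > 0) \<and>
      (\<forall>y. x < y \<and> y < x + e \<longrightarrow> deriv (deriv f) y < 0)))"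

end

theory Submission
  imports Defs "HOL-Computational_Algebra.Polynomial"
begin

(* Let P be the second derivative of nRel and N_k the number of connected k-sets, so that
   P(p) is the sum of N_k times the second derivative of p^k (1-p)^(n-k).
   At p = 0 only k = 1, 2 contribute, giving P(0) = 2 N_2 - 2 n (n-1) < 0.
   At b = 3/(n-1) all terms with k >= 6 are nonnegative, while the negative terms k = 2, ..., 5
   are controlled by (k-1) N_k <= m (n-2 choose k-2): a connected k-set contains a spanning tree,
   and each edge lies in exactly (n-2 choose k-2) sets of size k. Under the density bound this
   gives P(b) > 0 (the bound together with m >= n - 1 also forces n >= 11).
   Finally P is negative somewhere in (b,1): otherwise nRel' would increase on [b,1] up to
   nRel'(1) = n - N_(n-1) <= 0, a consequence of 2-connectivity, and then nRel(b) >= nRel(1) = 1,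
   which is impossible. The two sign changes of the polynomial P are the inflection points. *)

section \<open>Sign changes of real polynomials\<close>

lemma poly_pos_iff_pos_if_no_root:
  fixes P :: "real poly"
  assumes "x \<le> y" and "\<forall>z\<in>{x..y}. poly P z \<noteq> 0"
  shows "poly P x > 0 \<longleftrightarrow> poly P y > 0"
proof (cases "x = y")
  case False
  then have "x < y" using assms(1) by simp
  have "poly P x \<noteq> 0" "poly P y \<noteq> 0" using assms by auto
  moreover have "\<not> (poly P x < 0 \<and> poly P y > 0)" "\<not> (poly P x > 0 \<and> poly P y < 0)"
    using poly_IVT_pos[OF \<open>x < y\<close>] poly_IVT_neg[OF \<open>x < y\<close>] assms(2) by fastforce+
  ultimately show ?thesis by linarith
qed simp

lemma poly_constant_sign_left_of:
  fixes P :: "real poly"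
  assumes "P \<noteq> 0" and "a < z"
  obtains m where "a < m" "m < z"
    and "\<And>y. m \<le> y \<Longrightarrow> y < z \<Longrightarrow> poly P y \<noteq> 0 \<and> (poly P y < 0 \<longleftrightarrow> poly P m < 0)"
proof -
  obtain d where d: "d > 0" "\<And>w. poly P w = 0 \<Longrightarrow> w \<noteq> z \<Longrightarrow> d \<le> dist z w"
    using finite_set_avoid[OF poly_roots_finite[OF assms(1)], of z] by auto
  define m where "m = (max a (z - d) + z) / 2"
  have am: "a < m" and mz: "m < z" and zdm: "z - d < m" using assms(2) d(1) unfolding m_def by auto
  have no_root: "poly P w \<noteq> 0" if "m \<le> w" "w < z" for w
    using d(2)[of w] that zdm by (auto simp: dist_real_def)
  have "poly P y < 0 \<longleftrightarrow> poly P m < 0" if "m \<le> y" "y < z" for y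
  proof -
    have "poly P m > 0 \<longleftrightarrow> poly P y > 0"
      using that no_root by (intro poly_pos_iff_pos_if_no_root) auto
    moreover have "poly P m \<noteq> 0" "poly P y \<noteq> 0" using no_root that mz by auto
    ultimately show ?thesis by linarith
  qed
  with am mz no_root show ?thesis by (intro that) auto
qed

lemma poly_sign_change_neg_pos:
  fixes P :: "real poly"
  assumes "a < b" and "poly P a < 0" and "poly P b > 0"
  shows "\<exists>x. a < x \<and> x < b \<and> (\<exists>e>0. (\<forall>y. x - e < y \<and> y < x \<longrightarrow> poly P y < 0) \<and>
           (\<forall>y. x < y \<and> y < x + e \<longrightarrow> poly P y > 0))"
  using assms
proof (induction "card {z. a < z \<and> z < b \<and> poly P z = 0}" arbitrary: b rule: less_induct)
  case less
  define R where "R = {z. a < z \<and> z < b \<and> poly P z = 0}"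
  have "P \<noteq> 0" using less.prems by auto
  then have "finite R" unfolding R_def by (rule rev_finite_subset[OF poly_roots_finite]) auto
  moreover have "R \<noteq> {}" using poly_IVT_pos[OF less.prems] unfolding R_def by blast
  ultimately have z: "Max R \<in> R" and z_max: "\<And>w. w \<in> R \<Longrightarrow> w \<le> Max R" by auto
  define z where "z = Max R"
  have az: "a < z" and zb: "z < b" using z unfolding z_def R_def by auto
  have right: "poly P y > 0" if "z < y" "y < b" for y
  proof -
    have "poly P w \<noteq> 0" if "w \<in> {y..b}" for w
    proof (cases "w = b")
      case False
      then have "w \<notin> R" using z_max[of w] that \<open>z < y\<close> by (auto simp: z_def)
      then show ?thesis using that az \<open>z < y\<close> False unfolding R_def by auto
    qed (use less.prems in simp)
    then show ?thesis using poly_pos_iff_pos_if_no_root[of y b P] that less.prems(3) by simp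
  qed
  obtain m where am: "a < m" and mz: "m < z"
    and left: "\<And>y. m \<le> y \<Longrightarrow> y < z \<Longrightarrow> poly P y \<noteq> 0 \<and> (poly P y < 0 \<longleftrightarrow> poly P m < 0)"
    using poly_constant_sign_left_of[OF \<open>P \<noteq> 0\<close> az] by blast
  show ?case
  proof (cases "poly P m < 0")
    case True
    show ?thesis
    proof (intro exI conjI)
      show "min (z - m) (b - z) > 0" using mz zb by simp
      show "\<forall>y. z - min (z - m) (b - z) < y \<and> y < z \<longrightarrow> poly P y < 0"
        using left True by auto
      show "\<forall>y. z < y \<and> y < z + min (z - m) (b - z) \<longrightarrow> poly P y > 0"
        using right by auto
    qed (use az zb in auto)
  next
    case False
    then have Pm: "poly P m > 0" using left[of m] mz by linarith
    have "{w. a < w \<and> w < m \<and> poly P w = 0} \<subset> R"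
    proof
      show "{w. a < w \<and> w < m \<and> poly P w = 0} \<subseteq> R" using mz zb unfolding R_def by auto
      show "{w. a < w \<and> w < m \<and> poly P w = 0} \<noteq> R"
        using z mz unfolding z_def by (metis (mono_tags) mem_Collect_eq order.asym)
    qed
    then have "card {w. a < w \<and> w < m \<and> poly P w = 0} < card R"
      by (rule psubset_card_mono[OF \<open>finite R\<close>])
    then obtain x where "a < x" "x < m" "\<exists>e>0. (\<forall>y. x - e < y \<and> y < x \<longrightarrow> poly P y < 0) \<and>
           (\<forall>y. x < y \<and> y < x + e \<longrightarrow> poly P y > 0)"
      using less.hyps am less.prems(2) Pm unfolding R_def by blast
    then show ?thesis using mz zb by (intro exI[of _ x]) auto
  qed
qed

lemma inflection_point_between:
  fixes f :: "real \<Rightarrow> real"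
  assumes "deriv (deriv f) = poly P" and "a < b" and "poly P a * poly P b < 0"
  shows "\<exists>x. a < x \<and> x < b \<and> inflection_point f x"
proof (cases "poly P a < 0")
  case True
  with assms(3) have "poly P b > 0" by (simp add: mult_less_0_iff)
  from poly_sign_change_neg_pos[OF assms(2) True this] show ?thesis
    unfolding inflection_point_def assms(1) by blast
next
  case False
  with assms(3) have "poly (-P) a < 0" "poly (-P) b > 0" by (auto simp: mult_less_0_iff)
  from poly_sign_change_neg_pos[OF assms(2) this] show ?thesis
    unfolding inflection_point_def assms(1) by auto
qed

section \<open>Bernstein monomials\<close>

lemma sum_group_by_card:
  fixes h :: "nat \<Rightarrow> 'b::semiring_1"
  assumes "finite F" and "\<And>C. C \<in> F \<Longrightarrow> card C \<le> n"
  shows "(\<Sum>C\<in>F. h (card C)) = (\<Sum>k\<le>n. of_nat (card {C \<in> F. card C = k}) * h k)"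
proof -
  have "(\<Sum>C\<in>F. h (card C)) = (\<Sum>C\<in>F. \<Sum>k\<le>n. if card C = k then h k else 0)"
    using assms(2) by (intro sum.cong) auto
  also have "\<dots> = (\<Sum>k\<le>n. \<Sum>C\<in>F. if card C = k then h k else 0)"
    by (rule sum.swap)
  also have "\<dots> = (\<Sum>k\<le>n. of_nat (card {C \<in> F. card C = k}) * h k)"
    using assms(1) by (simp add: sum.If_cases Int_def)
  finally show ?thesis .
qed

lemma sum_Pow_bernstein:
  fixes p :: real
  assumes "finite S"
  shows "(\<Sum>C\<in>Pow S. p ^ card C * (1 - p) ^ (card S - card C)) = 1"
proof -
  have "(\<Sum>C\<in>Pow S. p ^ card C * (1 - p) ^ (card S - card C))
      = (\<Sum>k\<le>card S. real (card S choose k) * (p ^ k * (1 - p) ^ (card S - k)))"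
    using assms by (subst sum_group_by_card[where n = "card S"])
      (auto simp: card_mono n_subsets[symmetric] Pow_def)
  also have "\<dots> = (p + (1 - p)) ^ card S"
    unfolding binomial_ring by (simp only: mult.assoc)
  finally show ?thesis by simp
qed

definition bern_d1 :: "nat \<Rightarrow> nat \<Rightarrow> real \<Rightarrow> real" where
  "bern_d1 k j p = real k * p ^ (k - 1) * (1 - p) ^ j - real j * p ^ k * (1 - p) ^ (j - 1)"

definition bern_d2 :: "nat \<Rightarrow> nat \<Rightarrow> real \<Rightarrow> real" where
  "bern_d2 k j p = real k * real (k - 1) * p ^ (k - 2) * (1 - p) ^ j
     - 2 * real k * real j * p ^ (k - 1) * (1 - p) ^ (j - 1)
     + real j * real (j - 1) * p ^ k * (1 - p) ^ (j - 2)"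

lemma has_real_derivative_bern: "((\<lambda>p. p ^ k * (1 - p) ^ j) has_real_derivative bern_d1 k j p) (at p)"
  unfolding bern_d1_def by (auto intro!: derivative_eq_intros simp: algebra_simps)

lemma has_real_derivative_bern_d1: "(bern_d1 k j has_real_derivative bern_d2 k j p) (at p)"
  unfolding bern_d1_def bern_d2_def
  by (auto intro!: derivative_eq_intros simp: algebra_simps numeral_2_eq_2)

lemma bern_d2_factor:
  "p\<^sup>2 * (1 - p)\<^sup>2 * bern_d2 k j p = p ^ k * (1 - p) ^ j *
     (real k * (real k - 1) * (1 - p)\<^sup>2 - 2 * real k * real j * p * (1 - p)
      + real j * (real j - 1) * p\<^sup>2)"
proof -
  have split: "n = 0 \<or> n = 1 \<or> (\<exists>n'. n = n' + 2)" for n :: nat by presburger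
  show ?thesis
    using split[of k] split[of j]
    by (auto simp: bern_d2_def algebra_simps power2_eq_square)
qed

(* (n-1)^2 times the bracket of bern_d2_factor at p = 3/(n-1) and j = n - k, where
   p (n-1) = 3 and (1-p)(n-1) = n - 4 *)
definition bern_d2_coeff :: "real \<Rightarrow> real \<Rightarrow> real" where
  "bern_d2_coeff k n = k * (k - 1) * (n - 4)\<^sup>2 - 6 * k * (n - k) * (n - 4) + 9 * (n - k) * (n - k - 1)"

lemma bern_d2_at_three_div:
  fixes n k :: nat
  defines "p \<equiv> 3 / (real n - 1)"
  assumes "k \<le> n" and "4 < n"
  shows "(real n - 1) ^ (n + 2) * (p\<^sup>2 * (1 - p)\<^sup>2 * bern_d2 k (n - k) p)
    = 3 ^ k * (real n - 4) ^ (n - k) * bern_d2_coeff k n"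
proof -
  have p: "p * (real n - 1) = 3" and q: "(1 - p) * (real n - 1) = real n - 4"
    using assms(3) unfolding p_def by (auto simp: field_simps)
  have j: "real (n - k) = real n - real k" and e: "k + (n - k) + 2 = n + 2" using assms(2) by auto
  have scale: "a ^ (k + i + 2) * (x ^ k * y ^ i * (X * y\<^sup>2 - Y * x * y + Z * x\<^sup>2))
      = (x * a) ^ k * (y * a) ^ i * (X * (y * a)\<^sup>2 - Y * (x * a) * (y * a) + Z * (x * a)\<^sup>2)"
    for a x y X Y Z :: real and i
    by (simp add: power_add power_mult_distrib power2_eq_square algebra_simps)
  have "(real n - 1) ^ (n + 2) * (p\<^sup>2 * (1 - p)\<^sup>2 * bern_d2 k (n - k) p)
    = (p * (real n - 1)) ^ k * ((1 - p) * (real n - 1)) ^ (n - k) *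
      (real k * (real k - 1) * ((1 - p) * (real n - 1))\<^sup>2
       - 2 * real k * real (n - k) * (p * (real n - 1)) * ((1 - p) * (real n - 1))
       + real (n - k) * (real (n - k) - 1) * (p * (real n - 1))\<^sup>2)"
    unfolding bern_d2_factor e[symmetric] by (rule scale)
  also have "\<dots> = 3 ^ k * (real n - 4) ^ (n - k) * bern_d2_coeff k n"
    unfolding p q j bern_d2_coeff_def by (simp add: algebra_simps)
  finally show ?thesis .
qed

lemma bern_d2_coeff_nonneg:
  fixes k n :: nat
  assumes "6 \<le> k" and "k \<le> n"
  shows "0 \<le> bern_d2_coeff k n"
proof -
  obtain j where n: "n = k + j" using assms(2) le_Suc_ex by blast
  define K where "K = real k"
  have "0 \<le> real j * (real j - 1)" by (cases j) auto
  show ?thesis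
  proof (cases "k = 6")
    case True
    then have "bern_d2_coeff k n = 3 * (real j)\<^sup>2 + 39 * real j + 120"
      unfolding n bern_d2_coeff_def by (simp add: algebra_simps power2_eq_square)
    then show ?thesis by simp
  next
    case False
    then have K7: "7 \<le> K" using assms(1) unfolding K_def by simp
    have "bern_d2_coeff k n = K * (K + real j - 4) * ((K - 7) * (K + real j) + 2 * K + 4)
        + 9 * (real j * (real j - 1))"
      unfolding n bern_d2_coeff_def K_def by (simp add: algebra_simps power2_eq_square)
    also have "\<dots> \<ge> 0"
    proof -
      have "0 \<le> K * (K + real j - 4) * ((K - 7) * (K + real j) + 2 * K + 4)"
        using K7 by (intro mult_nonneg_nonneg) auto
      then show ?thesis using \<open>0 \<le> real j * (real j - 1)\<close> by linarith
    qed
    finally show ?thesis .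
  qed
qed

lemma bern_d2_coeff_small:
  fixes n :: real
  shows "bern_d2_coeff 1 n = 3 * (n - 1) * (n + 2)"
    and "bern_d2_coeff 2 n = - (n - 1) * (n - 10)"
    and "bern_d2_coeff 3 n = - 3 * (n - 1) * (n - 4)"
    and "bern_d2_coeff 4 n = - 3 * (n - 1) * (n - 4)"
    and "bern_d2_coeff 5 n = - (n - 1) * (n - 10)"
  by (simp_all add: bern_d2_coeff_def power2_eq_square algebra_simps)

section \<open>Counting connected sets\<close>

definition edge_set :: "('a \<Rightarrow> 'a \<Rightarrow> bool) \<Rightarrow> 'a set set" where
  "edge_set E = {{x, y} | x y. E x y}"

definition n_conn :: "'a set \<Rightarrow> ('a \<Rightarrow> 'a \<Rightarrow> bool) \<Rightarrow> nat \<Rightarrow> nat" where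
  "n_conn V E k = card {C. connected_set V E C \<and> card C = k}"

lemma graph_size_eq_card_edge_set: "graph_size E = card (edge_set E)"
  unfolding graph_size_def edge_set_def ..

lemma finite_edge_set: "simple_graph V E \<Longrightarrow> finite (edge_set E)"
  unfolding simple_graph_def edge_set_def by (rule finite_subset[of _ "Pow V"]) auto

lemma edge_set_subset_card_2:
  assumes "simple_graph V E" and "e \<in> edge_set E"
  shows "e \<subseteq> V" and "card e = 2"
  using assms unfolding simple_graph_def edge_set_def by (auto simp: card_insert_if)

lemma finite_connected_sets: "simple_graph V E \<Longrightarrow> finite {C. connected_set V E C}"
  unfolding simple_graph_def connected_set_def by (rule finite_subset[of _ "Pow V"]) auto

lemma connected_set_card_le_edges:
  assumes "finite C" and "connected_set V E C"
  shows "card C - 1 \<le> card {e \<in> edge_set E. e \<subseteq> C}"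
proof -
  obtain r where r: "r \<in> C" using assms(2) unfolding connected_set_def by blast
  define R where "R = (\<lambda>a b. E a b \<and> a \<in> C \<and> b \<in> C)"
  define d where "d v = (LEAST n. (R ^^ n) v r)" for v
  have reach: "\<exists>n. (R ^^ n) v r" if "v \<in> C" for v
    using assms(2) that r unfolding connected_set_def R_def by (simp add: rtranclp_power)
  have dR: "(R ^^ d v) v r" if "v \<in> C" for v
    unfolding d_def by (rule LeastI_ex[OF reach[OF that]])
  have "\<exists>u. R v u \<and> d u < d v" if v: "v \<in> C" "v \<noteq> r" for v
  proof -
    obtain m where m: "d v = Suc m" using dR[OF v(1)] v(2) by (cases "d v") auto
    with dR[OF v(1)] obtain u where "R v u" "(R ^^ m) u r" by (metis relpowp_Suc_D2)
    moreover have "d u \<le> m" unfolding d_def by (rule Least_le) fact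
    ultimately show ?thesis using m by auto
  qed
  then obtain parent where parent: "\<And>v. v \<in> C \<Longrightarrow> v \<noteq> r \<Longrightarrow> R v (parent v) \<and> d (parent v) < d v"
    by metis
  have "inj_on (\<lambda>v. {v, parent v}) (C - {r})"
  proof (rule inj_onI)
    fix v w assume v: "v \<in> C - {r}" and w: "w \<in> C - {r}" and eq: "{v, parent v} = {w, parent w}"
    show "v = w"
    proof (rule ccontr)
      assume "v \<noteq> w"
      with eq have "v = parent w" "w = parent v" by (auto simp: doubleton_eq_iff)
      then show False using parent[of v] parent[of w] v w by auto
    qed
  qed
  moreover have "(\<lambda>v. {v, parent v}) ` (C - {r}) \<subseteq> {e \<in> edge_set E. e \<subseteq> C}"
    using parent unfolding R_def edge_set_def by blast
  moreover have "finite {e \<in> edge_set E. e \<subseteq> C}"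
    using assms(1) by (rule rev_finite_subset[OF finite_Pow_iff[THEN iffD2]]) auto
  ultimately have "card (C - {r}) \<le> card {e \<in> edge_set E. e \<subseteq> C}"
    by (rule card_inj_on_le)
  then show ?thesis using r assms(1) by simp
qed

lemma card_le_graph_size_plus_1:
  assumes "simple_graph V E" and "connected_set V E V"
  shows "card V - 1 \<le> graph_size E"
proof -
  have "finite V" using assms(1) unfolding simple_graph_def by simp
  then have "card V - 1 \<le> card {e \<in> edge_set E. e \<subseteq> V}"
    using assms(2) by (rule connected_set_card_le_edges)
  also have "\<dots> \<le> graph_size E"
    unfolding graph_size_eq_card_edge_set by (rule card_mono[OF finite_edge_set[OF assms(1)]]) auto
  finally show ?thesis .
qed

lemma card_supersets_of_card:
  assumes "finite V" and "e \<subseteq> V" and "r \<le> k" and "card e = r"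
  shows "card {C. C \<subseteq> V \<and> card C = k \<and> e \<subseteq> C} = (card V - r) choose (k - r)"
proof -
  have "finite e" using assms(1,2) by (rule rev_finite_subset)
  have "bij_betw (\<lambda>D. D \<union> e) {D. D \<subseteq> V - e \<and> card D = k - r} {C. C \<subseteq> V \<and> card C = k \<and> e \<subseteq> C}"
  proof (rule bij_betw_byWitness[where f' = "\<lambda>C. C - e"])
    show "(\<lambda>D. D \<union> e) ` {D. D \<subseteq> V - e \<and> card D = k - r} \<subseteq> {C. C \<subseteq> V \<and> card C = k \<and> e \<subseteq> C}"
    proof clarify
      fix D assume D: "D \<subseteq> V - e" "card D = k - r"
      then have "finite D" using assms(1) by (meson Diff_subset finite_subset)
      then have "card (D \<union> e) = card D + card e"
        using D(1) \<open>finite e\<close> by (intro card_Un_disjoint) auto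
      then show "D \<union> e \<subseteq> V \<and> card (D \<union> e) = k \<and> e \<subseteq> D \<union> e" using D assms(2-4) by auto
    qed
    show "(\<lambda>C. C - e) ` {C. C \<subseteq> V \<and> card C = k \<and> e \<subseteq> C} \<subseteq> {D. D \<subseteq> V - e \<and> card D = k - r}"
      using assms \<open>finite e\<close> by (auto simp: card_Diff_subset)
  qed auto
  then have "card {C. C \<subseteq> V \<and> card C = k \<and> e \<subseteq> C} = card {D. D \<subseteq> V - e \<and> card D = k - r}"
    by (simp add: bij_betw_same_card)
  also have "\<dots> = (card V - r) choose (k - r)"
    using assms \<open>finite e\<close> by (simp add: n_subsets card_Diff_subset)
  finally show ?thesis .
qed

lemma sum_card_edges_in_subsets:
  assumes "simple_graph V E" and "2 \<le> k"
  shows "(\<Sum>C\<in>{C. C \<subseteq> V \<and> card C = k}. card {e \<in> edge_set E. e \<subseteq> C})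
    = graph_size E * ((card V - 2) choose (k - 2))"
proof -
  have "finite V" using assms(1) unfolding simple_graph_def by simp
  define K where "K = {C. C \<subseteq> V \<and> card C = k}"
  have "finite K" unfolding K_def using \<open>finite V\<close> by (rule rev_finite_subset[OF finite_Pow_iff[THEN iffD2]]) auto
  have "(\<Sum>C\<in>K. card {e \<in> edge_set E. e \<subseteq> C})
      = (\<Sum>C\<in>K. \<Sum>e\<in>edge_set E. if e \<subseteq> C then 1 else 0)"
    using finite_edge_set[OF assms(1)] by (simp add: sum.If_cases Int_def)
  also have "\<dots> = (\<Sum>e\<in>edge_set E. card {C \<in> K. e \<subseteq> C})"
    using \<open>finite K\<close> by (subst sum.swap) (simp add: sum.If_cases Int_def)
  also have "\<dots> = (\<Sum>e\<in>edge_set E. (card V - 2) choose (k - 2))"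
  proof (rule sum.cong)
    fix e assume "e \<in> edge_set E"
    with assms(1) have "e \<subseteq> V" "card e = 2" by (rule edge_set_subset_card_2)+
    then show "card {C \<in> K. e \<subseteq> C} = (card V - 2) choose (k - 2)"
      using card_supersets_of_card[OF \<open>finite V\<close> _ assms(2)] unfolding K_def by simp
  qed simp
  finally show ?thesis unfolding K_def graph_size_eq_card_edge_set by simp
qed

lemma n_conn_mult_le:
  assumes "simple_graph V E" and "2 \<le> k"
  shows "n_conn V E k * (k - 1) \<le> graph_size E * ((card V - 2) choose (k - 2))"
proof -
  have "finite V" using assms(1) unfolding simple_graph_def by simp
  define A where "A = {C. connected_set V E C \<and> card C = k}"
  define K where "K = {C. C \<subseteq> V \<and> card C = k}"
  have "A \<subseteq> K" unfolding A_def K_def connected_set_def by auto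
  have "n_conn V E k * (k - 1) = (\<Sum>C\<in>A. k - 1)" unfolding n_conn_def A_def by simp
  also have "\<dots> \<le> (\<Sum>C\<in>A. card {e \<in> edge_set E. e \<subseteq> C})"
    using connected_set_card_le_edges finite_subset[OF _ \<open>finite V\<close>]
    by (intro sum_mono) (auto simp: A_def connected_set_def)
  also have "\<dots> \<le> (\<Sum>C\<in>K. card {e \<in> edge_set E. e \<subseteq> C})"
    using \<open>A \<subseteq> K\<close> \<open>finite V\<close> by (intro sum_mono2) (auto simp: K_def)
  also have "\<dots> = graph_size E * ((card V - 2) choose (k - 2))"
    unfolding K_def by (rule sum_card_edges_in_subsets[OF assms])
  finally show ?thesis .
qed

lemma n_conn_0:
  assumes "simple_graph V E"
  shows "n_conn V E 0 = 0"
proof -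
  have "card C \<noteq> 0" if "connected_set V E C" for C
  proof -
    have "finite C" "C \<noteq> {}"
      using that assms finite_subset unfolding connected_set_def simple_graph_def by auto
    then show ?thesis by simp
  qed
  then have "{C. connected_set V E C \<and> card C = 0} = {}" by auto
  then show ?thesis unfolding n_conn_def by (metis card.empty)
qed

lemma n_conn_1: "n_conn V E 1 = card V"
proof -
  have "{C. connected_set V E C \<and> card C = 1} = (\<lambda>v. {v}) ` V"
    unfolding connected_set_def by (auto simp: card_1_singleton_iff)
  then show ?thesis unfolding n_conn_def by (simp add: card_image)
qed

lemma n_conn_card:
  assumes "simple_graph V E" and "connected_set V E V"
  shows "n_conn V E (card V) = 1"
proof -
  have "finite V" using assms(1) unfolding simple_graph_def by simp
  then have "C = V" if "connected_set V E C" "card C = card V" for C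
    using that card_subset_eq unfolding connected_set_def by blast
  then have "{C. connected_set V E C \<and> card C = card V} = {V}" using assms(2) by auto
  then show ?thesis unfolding n_conn_def by simp
qed

lemma card_le_n_conn_card_minus_1:
  assumes "simple_graph V E" and "two_connected V E"
  shows "card V \<le> n_conn V E (card V - 1)"
proof -
  have "finite V" using assms(1) unfolding simple_graph_def by simp
  have "finite {C. connected_set V E C \<and> card C = card V - 1}"
    using finite_connected_sets[OF assms(1)] by simp
  moreover have "(\<lambda>v. V - {v}) ` V \<subseteq> {C. connected_set V E C \<and> card C = card V - 1}"
    using assms(2) \<open>finite V\<close> unfolding two_connected_def by auto
  ultimately have "card ((\<lambda>v. V - {v}) ` V) \<le> n_conn V E (card V - 1)"
    unfolding n_conn_def by (rule card_mono)
  moreover have "inj_on (\<lambda>v. V - {v}) V" by (auto simp: inj_on_def)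
  ultimately show ?thesis by (simp add: card_image)
qed

section \<open>Node reliability and its derivatives\<close>

definition nRel_d1 :: "'a set \<Rightarrow> ('a \<Rightarrow> 'a \<Rightarrow> bool) \<Rightarrow> real \<Rightarrow> real" where
  "nRel_d1 V E p = (\<Sum>k\<le>card V. real (n_conn V E k) * bern_d1 k (card V - k) p)"

definition nRel_d2 :: "'a set \<Rightarrow> ('a \<Rightarrow> 'a \<Rightarrow> bool) \<Rightarrow> real \<Rightarrow> real" where
  "nRel_d2 V E p = (\<Sum>k\<le>card V. real (n_conn V E k) * bern_d2 k (card V - k) p)"

lemma nRel_eq_sum_n_conn:
  assumes "simple_graph V E"
  shows "nRel V E p = (\<Sum>k\<le>card V. real (n_conn V E k) * (p ^ k * (1 - p) ^ (card V - k)))"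
proof -
  have "finite V" using assms unfolding simple_graph_def by simp
  then show ?thesis
    unfolding nRel_def n_conn_def
    by (subst sum_group_by_card[where n = "card V", OF finite_connected_sets[OF assms]])
      (auto simp: connected_set_def card_mono)
qed

lemma has_real_derivative_nRel:
  assumes "simple_graph V E"
  shows "(nRel V E has_real_derivative nRel_d1 V E p) (at p)"
  unfolding nRel_eq_sum_n_conn[OF assms, abs_def] nRel_d1_def
  by (intro DERIV_sum DERIV_cmult has_real_derivative_bern)

lemma has_real_derivative_nRel_d1: "(nRel_d1 V E has_real_derivative nRel_d2 V E p) (at p)"
  unfolding nRel_d1_def[abs_def] nRel_d2_def
  by (intro DERIV_sum DERIV_cmult has_real_derivative_bern_d1)

lemma deriv2_nRel:
  assumes "simple_graph V E"
  shows "deriv (deriv (nRel V E)) = nRel_d2 V E"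
proof -
  have "deriv (nRel V E) = nRel_d1 V E"
    using has_real_derivative_nRel[OF assms] by (intro ext DERIV_imp_deriv)
  then show ?thesis using has_real_derivative_nRel_d1 by (auto intro!: ext DERIV_imp_deriv)
qed

lemma nRel_d2_is_poly:
  assumes "simple_graph V E"
  shows "\<exists>P. nRel_d2 V E = poly P"
proof -
  have deriv_poly: "deriv (poly Q) = poly (pderiv Q)" for Q :: "real poly"
    by (intro ext DERIV_imp_deriv poly_DERIV)
  define Q where
    "Q = (\<Sum>k\<le>card V. smult (real (n_conn V E k)) ([:0, 1:] ^ k * [:1, -1:] ^ (card V - k)))"
  have "nRel V E = poly Q"
    unfolding Q_def nRel_eq_sum_n_conn[OF assms, abs_def] by (simp add: poly_sum fun_eq_iff)
  then have "nRel_d2 V E = poly (pderiv (pderiv Q))"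
    using deriv2_nRel[OF assms] by (simp add: deriv_poly)
  then show ?thesis ..
qed

lemma nRel_d2_0:
  assumes "simple_graph V E" and "2 \<le> card V"
  shows "nRel_d2 V E 0 = 2 * real (n_conn V E 2) - 2 * real (card V) * (real (card V) - 1)"
proof -
  have "real (n_conn V E k) * bern_d2 k (card V - k) 0
      = (if k = 1 then - 2 * real (card V) * (real (card V) - 1) else 0)
        + (if k = 2 then 2 * real (n_conn V E 2) else 0)" if "k \<le> card V" for k
  proof -
    have "k = 0 \<or> k = 1 \<or> k = 2 \<or> 3 \<le> k" by arith
    then show ?thesis using that assms n_conn_0[OF assms(1)] n_conn_1[of V E]
      by (auto simp: bern_d2_def of_nat_diff power_0_left algebra_simps)
  qed
  then show ?thesis using assms(2) unfolding nRel_d2_def by (simp add: sum.distrib)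
qed

lemma nRel_d1_1:
  assumes "2 \<le> card V"
  shows "nRel_d1 V E 1 = real (card V) * real (n_conn V E (card V)) - real (n_conn V E (card V - 1))"
proof -
  have "real (n_conn V E k) * bern_d1 k (card V - k) 1
      = (if k = card V then real (card V) * real (n_conn V E k) else 0)
        - (if k = card V - 1 then real (n_conn V E k) else 0)" if "k \<le> card V" for k
  proof -
    have "card V - k = 0 \<or> card V - k = 1 \<or> 2 \<le> card V - k" by arith
    then show ?thesis using that assms by (auto simp: bern_d1_def power_0_left)
  qed
  then show ?thesis unfolding nRel_d1_def by (simp add: sum_subtractf)
qed

lemma nRel_1:
  assumes "simple_graph V E" and "connected_set V E V"
  shows "nRel V E 1 = 1"
proof -
  have "real (n_conn V E k) * (1 ^ k * (1 - 1) ^ (card V - k)) = (if k = card V then 1 else 0)"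
    if "k \<le> card V" for k
    using that n_conn_card[OF assms] by auto
  then show ?thesis unfolding nRel_eq_sum_n_conn[OF assms(1)] by simp
qed

lemma nRel_less_1:
  assumes "simple_graph V E" and "0 \<le> p" and "p < 1"
  shows "nRel V E p < 1"
proof -
  have "finite V" using assms(1) unfolding simple_graph_def by simp
  define f where "f C = p ^ card C * (1 - p) ^ (card V - card C)" for C :: "'a set"
  have "nRel V E p \<le> (\<Sum>C\<in>Pow V - {{}}. f C)"
    unfolding nRel_def f_def using \<open>finite V\<close> assms(2,3)
    by (intro sum_mono2) (auto simp: connected_set_def)
  also have "\<dots> = 1 - f {}"
    using \<open>finite V\<close> sum_Pow_bernstein[OF \<open>finite V\<close>, of p] by (simp add: sum_diff1 f_def)
  also have "\<dots> < 1" using assms(3) by (simp add: f_def)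
  finally show ?thesis .
qed

section \<open>Signs of the second derivative\<close>

lemma of_nat_choose_2: "2 * real (c choose 2) = real c * (real c - 1)"
  by (simp add: binomial_gbinomial gbinomial_Suc numeral_eq_Suc prod.atLeast0_atMost_Suc)

lemma of_nat_choose_3: "6 * real (c choose 3) = real c * (real c - 1) * (real c - 2)"
  by (simp add: binomial_gbinomial gbinomial_Suc numeral_eq_Suc prod.atLeast0_atMost_Suc field_simps)

lemma density_bound_inequality:
  fixes n m N2 N3 N4 N5 :: real
  assumes n: "11 \<le> n" and m: "m \<le> 0.0851 * n\<^sup>2"
    and N2: "N2 \<le> m" and N3: "2 * N3 \<le> m * (n - 2)"
    and N4: "6 * N4 \<le> m * (n - 2) * (n - 3)" and N5: "24 * N5 \<le> m * (n - 2) * (n - 3) * (n - 4)"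
  shows "N2 * (n - 4) ^ 3 * (n - 10) + 9 * N3 * (n - 4) ^ 3 + 27 * N4 * (n - 4)\<^sup>2 + 27 * N5 * (n - 10)
    < n * (n + 2) * (n - 4) ^ 4"
proof -
  define R where "R = (n - 4)\<^sup>2 * (n - 10) + 9/2 * (n - 2) * (n - 4)\<^sup>2
    + 9/2 * (n - 2) * (n - 3) * (n - 4) + 9/8 * (n - 2) * (n - 3) * (n - 10)"
  have "0 \<le> R" unfolding R_def using n by (intro add_nonneg_nonneg mult_nonneg_nonneg) auto
  have "N2 * ((n - 4) ^ 3 * (n - 10)) \<le> m * ((n - 4) ^ 3 * (n - 10))"
    using N2 n by (intro mult_right_mono) auto
  moreover have "(2 * N3) * (n - 4) ^ 3 \<le> (m * (n - 2)) * (n - 4) ^ 3"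
    using N3 n by (intro mult_right_mono) auto
  moreover have "(6 * N4) * (n - 4)\<^sup>2 \<le> (m * (n - 2) * (n - 3)) * (n - 4)\<^sup>2"
    using N4 n by (intro mult_right_mono) auto
  moreover have "(24 * N5) * (n - 10) \<le> (m * (n - 2) * (n - 3) * (n - 4)) * (n - 10)"
    using N5 n by (intro mult_right_mono) auto
  moreover have "m * (n - 4) * R = m * ((n - 4) ^ 3 * (n - 10)) + 9/2 * ((m * (n - 2)) * (n - 4) ^ 3)
      + 9/2 * ((m * (n - 2) * (n - 3)) * (n - 4)\<^sup>2)
      + 9/8 * ((m * (n - 2) * (n - 3) * (n - 4)) * (n - 10))"
    unfolding R_def by (simp add: power2_eq_square power3_eq_cube field_simps)
  ultimately have "N2 * (n - 4) ^ 3 * (n - 10) + 9 * N3 * (n - 4) ^ 3 + 27 * N4 * (n - 4)\<^sup>2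
      + 27 * N5 * (n - 10) \<le> m * (n - 4) * R"
    by (simp add: algebra_simps)
  also have "\<dots> \<le> 0.0851 * n\<^sup>2 * (n - 4) * R"
    using m n \<open>0 \<le> R\<close> by (intro mult_right_mono) auto
  also have "\<dots> < n * (n + 2) * (n - 4) ^ 4"
  proof -
    obtain t where t: "n = t + 11" "0 \<le> t" using n by (intro that[of "n - 11"]) auto
    have "80000 * ((n + 2) * (n - 4) ^ 3 - 0.0851 * n * R)
        = 28523340 + 14927299 * t + 2798055 * t\<^sup>2 + 206997 * t ^ 3 + 4261 * t ^ 4"
      unfolding R_def t(1) by (simp add: power2_eq_square power3_eq_cube power4_eq_xxxx field_simps)
    moreover have "0 \<le> t\<^sup>2" "0 \<le> t ^ 3" "0 \<le> t ^ 4" using t(2) by simp_all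
    ultimately have "0 < 80000 * ((n + 2) * (n - 4) ^ 3 - 0.0851 * n * R)" using t(2) by linarith
    then have "0.0851 * n * R < (n + 2) * (n - 4) ^ 3" by (simp add: mult_ac)
    then have "(n * (n - 4)) * (0.0851 * n * R) < (n * (n - 4)) * ((n + 2) * (n - 4) ^ 3)"
      using n by (intro mult_strict_left_mono) auto
    then show ?thesis by (simp add: power2_eq_square power3_eq_cube power4_eq_xxxx algebra_simps)
  qed
  finally show ?thesis .
qed

lemma n_conn_small_bounds:
  assumes "simple_graph V E" and "2 \<le> card V"
  defines "x \<equiv> real (card V)" and "m \<equiv> real (graph_size E)"
  shows "real (n_conn V E 2) \<le> m"
    and "2 * real (n_conn V E 3) \<le> m * (x - 2)"
    and "6 * real (n_conn V E 4) \<le> m * (x - 2) * (x - 3)"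
    and "24 * real (n_conn V E 5) \<le> m * (x - 2) * (x - 3) * (x - 4)"
proof -
  have bound: "real (n_conn V E k) * real (k - 1) \<le> m * real ((card V - 2) choose (k - 2))"
    if "2 \<le> k" for k
    using n_conn_mult_le[OF assms(1) that] unfolding m_def by (metis of_nat_le_iff of_nat_mult)
  have c1: "real (card V - 2) = x - 2" using assms(2) unfolding x_def by simp
  have c2: "2 * real ((card V - 2) choose 2) = (x - 2) * (x - 3)"
    using of_nat_choose_2[of "card V - 2"] unfolding c1 by simp
  have c3: "6 * real ((card V - 2) choose 3) = (x - 2) * (x - 3) * (x - 4)"
    using of_nat_choose_3[of "card V - 2"] unfolding c1 by (simp add: algebra_simps)
  show "real (n_conn V E 2) \<le> m" using bound[of 2] by simp
  show "2 * real (n_conn V E 3) \<le> m * (x - 2)" using bound[of 3] c1 by (simp add: mult.commute)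
  have "6 * real (n_conn V E 4) \<le> m * (2 * real ((card V - 2) choose 2))" using bound[of 4] by simp
  then show "6 * real (n_conn V E 4) \<le> m * (x - 2) * (x - 3)" unfolding c2 by (simp add: mult.assoc)
  have "24 * real (n_conn V E 5) \<le> m * (6 * real ((card V - 2) choose 3))" using bound[of 5] by simp
  then show "24 * real (n_conn V E 5) \<le> m * (x - 2) * (x - 3) * (x - 4)"
    unfolding c3 by (simp add: mult.assoc)
qed

lemma nRel_d2_0_neg:
  assumes "simple_graph V E" and "2 \<le> card V"
    and "real (graph_size E) \<le> 0.0851 * (real (card V))\<^sup>2"
  shows "nRel_d2 V E 0 < 0"
proof -
  have "real (n_conn V E 2) \<le> 0.0851 * (real (card V))\<^sup>2"
    using n_conn_small_bounds(1)[OF assms(1,2)] assms(3) by linarith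
  moreover have "0.0851 * (real (card V))\<^sup>2 < real (card V) * (real (card V) - 1)"
  proof -
    have "0 < real (card V) * (0.9149 * real (card V) - 1)"
      using assms(2) by (intro mult_pos_pos) auto
    then show ?thesis by (simp add: power2_eq_square algebra_simps)
  qed
  ultimately show ?thesis unfolding nRel_d2_0[OF assms(1,2)] by linarith
qed

lemma nRel_d2_at_three_div_scaled:
  fixes V :: "'a set"
  defines "x \<equiv> real (card V)"
  defines "p \<equiv> 3 / (x - 1)"
  assumes "4 < card V"
  shows "(x - 1) ^ (card V + 2) * (p\<^sup>2 * (1 - p)\<^sup>2 * nRel_d2 V E p)
    = (\<Sum>k\<le>card V. real (n_conn V E k) * (3 ^ k * (x - 4) ^ (card V - k) * bern_d2_coeff k x))"
  unfolding nRel_d2_def sum_distrib_left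
proof (rule sum.cong)
  fix k assume "k \<in> {..card V}"
  then show "(x - 1) ^ (card V + 2) * (p\<^sup>2 * (1 - p)\<^sup>2 * (real (n_conn V E k) * bern_d2 k (card V - k) p))
    = real (n_conn V E k) * (3 ^ k * (x - 4) ^ (card V - k) * bern_d2_coeff (real k) x)"
    using bern_d2_at_three_div[of k "card V"] assms(3) unfolding x_def p_def
    by (simp add: mult.left_commute)
qed simp

lemma sum_lower_terms_at_three_div:
  assumes "simple_graph V E" and "5 \<le> card V"
  defines "x \<equiv> real (card V)"
  shows "(\<Sum>k<6. real (n_conn V E k) * (3 ^ k * (x - 4) ^ (card V - k) * bern_d2_coeff k x))
    = 9 * (x - 1) * (x - 4) ^ (card V - 5) * (x * (x + 2) * (x - 4) ^ 4
       - (real (n_conn V E 2) * (x - 4) ^ 3 * (x - 10) + 9 * real (n_conn V E 3) * (x - 4) ^ 3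
          + 27 * real (n_conn V E 4) * (x - 4)\<^sup>2 + 27 * real (n_conn V E 5) * (x - 10)))"
proof -
  define N where "N k = real (n_conn V E k)" for k
  define c where "c k = N k * (3 ^ k * (x - 4) ^ (card V - k) * bern_d2_coeff k x)" for k
  define t where "t = (x - 4) ^ (card V - 5)"
  have pow: "(x - 4) ^ (card V - k) = t * (x - 4) ^ (5 - k)" if "k \<le> 5" for k
    using that assms(2) unfolding t_def by (simp flip: power_add)
  have "c 0 = 0" using n_conn_0[OF assms(1)] unfolding c_def N_def by simp
  moreover have "c 1 = 9 * (x - 1) * t * (x * (x + 2) * (x - 4) ^ 4)"
  proof -
    have "(x - 4) ^ (card V - 1) = t * (x - 4) ^ 4" using pow[of 1] by simp
    then show ?thesis unfolding c_def N_def n_conn_1 x_def[symmetric]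
      by (simp add: bern_d2_coeff_small algebra_simps)
  qed
  moreover have "c 2 = - 9 * (x - 1) * t * (N 2 * (x - 4) ^ 3 * (x - 10))"
    unfolding c_def pow[of 2, simplified] by (simp add: bern_d2_coeff_small algebra_simps)
  moreover have "c 3 = - 9 * (x - 1) * t * (9 * N 3 * (x - 4) ^ 3)"
    unfolding c_def pow[of 3, simplified]
    by (simp add: bern_d2_coeff_small power2_eq_square power3_eq_cube algebra_simps)
  moreover have "c 4 = - 9 * (x - 1) * t * (27 * N 4 * (x - 4)\<^sup>2)"
    unfolding c_def pow[of 4, simplified] by (simp add: bern_d2_coeff_small power2_eq_square algebra_simps)
  moreover have "c 5 = - 9 * (x - 1) * t * (27 * N 5 * (x - 10))"
    unfolding c_def pow[of 5, simplified] by (simp add: bern_d2_coeff_small algebra_simps)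
  moreover have "(\<Sum>k<6. c k) = c 0 + c 1 + c 2 + c 3 + c 4 + c 5" by (simp add: eval_nat_numeral)
  ultimately show ?thesis unfolding t_def[symmetric] c_def[symmetric] N_def[symmetric]
    by (simp add: algebra_simps)
qed

lemma nRel_d2_pos:
  assumes sg: "simple_graph V E" and n: "11 \<le> card V"
    and m: "real (graph_size E) \<le> 0.0851 * (real (card V))\<^sup>2"
  shows "0 < nRel_d2 V E (3 / (real (card V) - 1))"
proof -
  define x where "x = real (card V)"
  define p where "p = 3 / (x - 1)"
  define c where "c k = real (n_conn V E k) * (3 ^ k * (x - 4) ^ (card V - k) * bern_d2_coeff k x)" for k
  have x: "11 \<le> x" using n unfolding x_def by simp
  have "(x - 1) ^ (card V + 2) * (p\<^sup>2 * (1 - p)\<^sup>2 * nRel_d2 V E p) = (\<Sum>k\<le>card V. c k)"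
    using nRel_d2_at_three_div_scaled[of V E] n unfolding c_def p_def x_def by simp
  also have "\<dots> = (\<Sum>k<6. c k) + (\<Sum>k=6..card V. c k)"
  proof -
    have "{..card V} = {..<6} \<union> {6..card V}" using n by auto
    then show ?thesis by (simp only:) (rule sum.union_disjoint; auto)
  qed
  finally have scaled: "(x - 1) ^ (card V + 2) * (p\<^sup>2 * (1 - p)\<^sup>2 * nRel_d2 V E p)
    = (\<Sum>k<6. c k) + (\<Sum>k=6..card V. c k)" .
  have "2 \<le> card V" and "5 \<le> card V" using n by simp_all
  have "0 < (\<Sum>k<6. c k)"
    using density_bound_inequality[OF x m[folded x_def] n_conn_small_bounds[OF sg \<open>2 \<le> card V\<close>,
        folded x_def]] x
    unfolding c_def x_def sum_lower_terms_at_three_div[OF sg \<open>5 \<le> card V\<close>] by simp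
  moreover have "0 \<le> (\<Sum>k=6..card V. c k)"
    using n bern_d2_coeff_nonneg unfolding c_def x_def by (intro sum_nonneg mult_nonneg_nonneg) auto
  ultimately have "0 < (x - 1) ^ (card V + 2) * (p\<^sup>2 * (1 - p)\<^sup>2 * nRel_d2 V E p)"
    unfolding scaled by simp
  then have "0 < ((x - 1) ^ (card V + 2) * (p\<^sup>2 * (1 - p)\<^sup>2)) * nRel_d2 V E p"
    by (simp only: mult.assoc)
  moreover have "0 < p" and "p < 1" using x unfolding p_def by (auto simp: field_simps)
  then have "0 < (x - 1) ^ (card V + 2) * (p\<^sup>2 * (1 - p)\<^sup>2)" using x by simp
  ultimately show ?thesis unfolding p_def x_def by (rule zero_less_mult_pos)
qed

lemma nRel_d1_1_nonpos:
  assumes "simple_graph V E" and "two_connected V E"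
  shows "nRel_d1 V E 1 \<le> 0"
proof -
  have cV: "connected_set V E V" and n: "2 \<le> card V"
    using assms(2) unfolding two_connected_def by auto
  have "nRel_d1 V E 1 = real (card V) - real (n_conn V E (card V - 1))"
    using nRel_d1_1[OF n] n_conn_card[OF assms(1) cV] by simp
  then show ?thesis using card_le_n_conn_card_minus_1[OF assms] by simp
qed

lemma nRel_d2_neg_near_1:
  assumes sg: "simple_graph V E" and tc: "two_connected V E" and b: "0 \<le> b" "b < 1"
  shows "\<exists>c. b < c \<and> c < 1 \<and> nRel_d2 V E c < 0"
proof (rule ccontr)
  assume "\<not> ?thesis"
  then have d2_nonneg: "0 \<le> nRel_d2 V E c" if "b < c" "c < 1" for c
    using that by (meson not_le)
  have d1_nonpos: "nRel_d1 V E y \<le> 0" if "b \<le> y" "y < 1" for y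
  proof -
    obtain z where z: "y < z" "z < 1" "nRel_d1 V E 1 - nRel_d1 V E y = (1 - y) * nRel_d2 V E z"
      using MVT2[OF \<open>y < 1\<close>, of "nRel_d1 V E" "nRel_d2 V E"] has_real_derivative_nRel_d1 by blast
    have "0 \<le> (1 - y) * nRel_d2 V E z" using d2_nonneg[of z] z that by simp
    then show ?thesis using z(3) nRel_d1_1_nonpos[OF sg tc] by linarith
  qed
  obtain z where z: "b < z" "z < 1" "nRel V E 1 - nRel V E b = (1 - b) * nRel_d1 V E z"
    using MVT2[OF \<open>b < 1\<close>, of "nRel V E" "nRel_d1 V E"] has_real_derivative_nRel[OF sg] by blast
  have "(1 - b) * nRel_d1 V E z \<le> 0" using d1_nonpos[of z] z b by (simp add: mult_nonneg_nonpos)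
  moreover have "nRel V E 1 = 1" using tc unfolding two_connected_def by (intro nRel_1 sg) auto
  ultimately show False using z(3) nRel_less_1[OF sg b] by linarith
qed

lemma card_ge_11:
  assumes "simple_graph V E" and "two_connected V E"
    and "real (graph_size E) \<le> 0.0851 * (real (card V))\<^sup>2"
  shows "11 \<le> card V"
proof (rule ccontr)
  assume "\<not> 11 \<le> card V"
  moreover have "3 \<le> card V" and "connected_set V E V" using assms(2) unfolding two_connected_def by auto
  ultimately have "card V \<in> {3, 4, 5, 6, 7, 8, 9, 10}" by auto
  moreover have "real (card V - 1) \<le> 0.0851 * (real (card V))\<^sup>2"
    using card_le_graph_size_plus_1[OF assms(1) \<open>connected_set V E V\<close>] assms(3)
      of_nat_mono order_trans by blast
  ultimately show False by (auto simp: power2_eq_square)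
qed

theorem theorem3p4:
  fixes V :: "'a set" and E :: "'a \<Rightarrow> 'a \<Rightarrow> bool"
  assumes "simple_graph V E"
    and "real (graph_size E) \<le> 0.0851 * (real (card V))\<^sup>2"
    and "two_connected V E"
  shows "\<exists>x y. 0 < x \<and> x < y \<and> y < 1 \<and>
           inflection_point (nRel V E) x \<and> inflection_point (nRel V E) y"
proof -
  have n: "11 \<le> card V" using card_ge_11[OF assms(1,3,2)] .
  obtain P where P: "nRel_d2 V E = poly P" using nRel_d2_is_poly[OF assms(1)] by blast
  have d2: "deriv (deriv (nRel V E)) = poly P" using deriv2_nRel[OF assms(1)] P by simp
  define b where "b = 3 / (real (card V) - 1)"
  have b: "0 < b" "b < 1" using n unfolding b_def by (auto simp: field_simps)
  have "poly P 0 < 0" using nRel_d2_0_neg[OF assms(1) _ assms(2)] n unfolding P by simp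
  moreover have "0 < poly P b" using nRel_d2_pos[OF assms(1) n assms(2)] unfolding P b_def .
  ultimately obtain x where x: "0 < x" "x < b" "inflection_point (nRel V E) x"
    using inflection_point_between[OF d2 \<open>0 < b\<close>] by (auto simp: mult_neg_pos)
  obtain c where c: "b < c" "c < 1" "poly P c < 0"
    using nRel_d2_neg_near_1[OF assms(1,3) less_imp_le[OF b(1)] b(2)] unfolding P by blast
  with \<open>0 < poly P b\<close> obtain y where y: "b < y" "y < c" "inflection_point (nRel V E) y"
    using inflection_point_between[OF d2 \<open>b < c\<close>] by (auto simp: mult_pos_neg)
  show ?thesis using x y c by (intro exI[of _ x] exI[of _ y]) auto
qed

end
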